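(* Let $\lambda$ be a partition of $n$. Every connected component of the graph $\mathcal A_\lambda$ contains a reverse row superstandard tabloid and a column superstandard tabloid.
   Context: Fix $n\ge1$; $\overline i=i+n\mathbb Z$, $[\overline n]=\{\overline1,\dots,\overline n\}$. A tabloid of shape $\lambda$ is a sequence $(T_1,\dots,T_k)$, $k=\ell(\lambda)$, of pairwise disjoint subsets of $[\overline n]$ with $|T_r|=\lambda_r$ and union $[\overline n]$ (row 1 highest). $\tau(T)=\{\overline i:\overline i\text{ lies in a strictly higher row than }\overline{i+1}\}$. $T,T'$ are connected by a Knuth move if $T'$ is obtained from $T$ by exchanging $\overline i$ and $\overline{i+1}$ for some $i$ and neither of $\tau(T),\tau(T')$ contains the other; $\mathcal A_\lambda$ is the graph on tabloids of shape $\lambda$ with these edges. For $i\in\mathbb Z$, the reverse row superstandard tabloid of shape $\lambda$ with start $i$ has last row $T_k=\{\overline i,\overline{i+1},\dots,\overline{i+\lambda_k-1}\}$, next row $T_{k-1}=\{\overline{i+\lambda_k},\dots,\overline{i+\lambda_k+\lambda_{k-1}-1}\}$, and so on upward. The column superstandard tabloid of shape $\lambda$ with start $i$ is obtained by filling the columns of the Young diagram of $\lambda$, left to right and each from top to bottom, with consecutive entries $\overline i,\overline{i+1},\overline{i+2},\dots$, and then taking $T_r$ to be the set of entries in row $r$. *)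

theory Defs
  imports Main
begin

text \<open>The residue class of i + nZ is represented by the natural number (i mod n) in {0..<n}.\<close>

definition cls :: "nat \<Rightarrow> int \<Rightarrow> nat" where
  "cls n i = nat (i mod int n)"

definition is_partition :: "nat \<Rightarrow> nat list \<Rightarrow> bool" where
  "is_partition n lam \<longleftrightarrow> sorted_wrt (\<ge>) lam \<and> (\<forall>x\<in>set lam. 0 < x) \<and> sum_list lam = n"

text \<open>A tabloid of shape lam: list of rows (row 0 is the highest).\<close>
definition is_tabloid :: "nat \<Rightarrow> nat list \<Rightarrow> nat set list \<Rightarrow> bool" where
  "is_tabloid n lam T \<longleftrightarrow> length T = length lam
     \<and> (\<forall>r < length T. card (T ! r) = lam ! r)
     \<and> (\<forall>r < length T. \<forall>s < length T. r \<noteq> s \<longrightarrow> T ! r \<inter> T ! s = {})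
     \<and> (\<Union>r < length T. T ! r) = {0..<n}"

definition row_of :: "nat set list \<Rightarrow> nat \<Rightarrow> nat" where
  "row_of T x = (THE r. r < length T \<and> x \<in> T ! r)"

definition tau :: "nat \<Rightarrow> nat set list \<Rightarrow> nat set" where
  "tau n T = {x \<in> {0..<n}. row_of T x < row_of T ((x + 1) mod n)}"

definition exch :: "nat \<Rightarrow> nat \<Rightarrow> nat set list \<Rightarrow> nat set list" where
  "exch n x T = map (\<lambda>R. (\<lambda>y. if y = x then (x + 1) mod n else if y = (x + 1) mod n then x else y) ` R) T"

definition knuth_move :: "nat \<Rightarrow> nat list \<Rightarrow> nat set list \<Rightarrow> nat set list \<Rightarrow> bool" where
  "knuth_move n lam T T' \<longleftrightarrow> is_tabloid n lam T \<and> is_tabloid n lam T'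
     \<and> (\<exists>x < n. T' = exch n x T)
     \<and> \<not> tau n T \<subseteq> tau n T' \<and> \<not> tau n T' \<subseteq> tau n T"

definition rev_row_superstd :: "nat \<Rightarrow> nat list \<Rightarrow> int \<Rightarrow> nat set list" where
  "rev_row_superstd n lam i =
     map (\<lambda>r. {cls n (i + int (sum_list (drop (Suc r) lam)) + int t) | t. t < lam ! r})
         [0..<length lam]"

definition col_len :: "nat list \<Rightarrow> nat \<Rightarrow> nat" where
  "col_len lam c = length (filter (\<lambda>x. c < x) lam)"

definition col_superstd :: "nat \<Rightarrow> nat list \<Rightarrow> int \<Rightarrow> nat set list" where
  "col_superstd n lam i =
     map (\<lambda>r. {cls n (i + int (\<Sum>c'<c. col_len lam c') + int r) | c. c < lam ! r})
         [0..<length lam]"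

end

(*
  Encode a tabloid by its row word w, where w ! j is the row containing j. Swapping two
  adjacent letters of w is a Knuth move whenever a neighbouring letter lies between them
  (the Knuth relations), and such swaps preserve, for every letter v, the largest excess of
  letters v over letters v + 1 in a suffix of w. Rotating w by one position is a cyclic shift
  of the tabloid, and cyclic shifts map Knuth moves to Knuth moves.

  If w is not weakly decreasing, Knuth moves carry an ascent to the end of the word. Rotating
  its last letter x > 0 to the front then strictly increases the bounded potential
  sum_v (k - v) * (maximal suffix excess of v). So every tabloid is connected to one with a
  weakly decreasing row word, i.e. to a reverse row superstandard tabloid. The column
  superstandard tabloid is connected to one of these as well, and a cyclic shift of that
  path makes the starts match.
*)

theory Submission
  imports Defs "HOL-Library.Multiset" "HOL-Combinatorics.Transposition" "HOL-Number_Theory.Cong"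
begin

lemma tabloid_length: "is_tabloid n lam T \<Longrightarrow> length T = length lam"
  unfolding is_tabloid_def by blast

lemma tabloid_row_subset: "is_tabloid n lam T \<Longrightarrow> r < length T \<Longrightarrow> T ! r \<subseteq> {0..<n}"
  unfolding is_tabloid_def by blast

lemma tabloid_rows_subset: "is_tabloid n lam T \<Longrightarrow> \<forall>R\<in>set T. R \<subseteq> {0..<n}"
  by (metis in_set_conv_nth tabloid_row_subset)

lemma row_of_eqI:
  assumes "is_tabloid n lam T" "r < length T" "y \<in> T ! r"
  shows "row_of T y = r"
  unfolding row_of_def
proof (rule the_equality)
  fix r' assume "r' < length T \<and> y \<in> T ! r'"
  with assms show "r' = r"
    unfolding is_tabloid_def by blast
qed (use assms in simp)

lemma row_of_mem:
  assumes "is_tabloid n lam T" "y < n"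
  shows "row_of T y < length T \<and> y \<in> T ! row_of T y"
proof -
  obtain r where "r < length T" "y \<in> T ! r"
    using assms unfolding is_tabloid_def by (metis UN_iff atLeastLessThan_iff lessThan_iff zero_le)
  then show ?thesis
    using row_of_eqI[OF assms(1)] by simp
qed

lemma tau_subset: "tau n T \<subseteq> {0..<n}"
  by (auto simp: tau_def)

lemma exch_eq_transpose: "exch n x T = map ((`) (Transposition.transpose x ((x + 1) mod n))) T"
  unfolding exch_def transpose_def ..

lemma exch_exch: "exch n x (exch n x T) = T"
  by (simp add: exch_eq_transpose image_image map_idI)

lemma symp_knuth_move: "symp (knuth_move n lam)"
  unfolding knuth_move_def by (rule sympI) (metis exch_exch)

lemma rtranclp_knuth_move_sym:
  "(knuth_move n lam)\<^sup>*\<^sup>* T T' \<Longrightarrow> (knuth_move n lam)\<^sup>*\<^sup>* T' T"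
  by (rule sympD[OF symp_rtranclp[OF symp_knuth_move]])

section \<open>Cyclic shifts\<close>

definition cshift :: "nat \<Rightarrow> nat \<Rightarrow> nat \<Rightarrow> nat" where
  "cshift n s y = (y + s) mod n"

definition shift_tabloid :: "nat \<Rightarrow> nat \<Rightarrow> nat set list \<Rightarrow> nat set list" where
  "shift_tabloid n s T = map ((`) (cshift n s)) T"

lemma inj_on_cshift: "inj_on (cshift n s) {0..<n}"
  by (rule inj_onI) (use cong_add_rcancel_nat in \<open>auto simp: cshift_def cong_def\<close>)

lemma cshift_less: "0 < n \<Longrightarrow> cshift n s y < n"
  by (simp add: cshift_def)

lemma cshift_image: "0 < n \<Longrightarrow> cshift n s ` {0..<n} = {0..<n}"
  by (rule endo_inj_surj) (auto simp: cshift_less inj_on_cshift)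

lemma cshift_Suc_mod: "cshift n s (Suc y mod n) = Suc (cshift n s y) mod n"
  by (simp add: cshift_def mod_simps ac_simps)

lemma cshift_transpose:
  assumes "0 < n" "x < n" "y < n"
  shows "cshift n s (Transposition.transpose x ((x + 1) mod n) y)
       = Transposition.transpose (cshift n s x) ((cshift n s x + 1) mod n) (cshift n s y)"
proof -
  have inj: "cshift n s y = cshift n s b \<longleftrightarrow> y = b" if "b < n" for b
    using inj_on_cshift[of n s] assms(3) that unfolding inj_on_def by auto
  have "Suc x mod n < n"
    using assms(1) by simp
  then show ?thesis
    using inj assms(2) by (simp add: transpose_def cshift_Suc_mod[symmetric])
qed

lemma length_shift_tabloid [simp]: "length (shift_tabloid n s T) = length T"
  by (simp add: shift_tabloid_def)

lemma nth_shift_tabloid [simp]: "r < length T \<Longrightarrow> shift_tabloid n s T ! r = cshift n s ` (T ! r)"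
  by (simp add: shift_tabloid_def)

lemma is_tabloid_shift_tabloid:
  assumes T: "is_tabloid n lam T" and "0 < n"
  shows "is_tabloid n lam (shift_tabloid n s T)"
proof -
  have inj: "inj_on (cshift n s) (T ! r)" if "r < length T" for r
    using inj_on_subset[OF inj_on_cshift tabloid_row_subset[OF T that]] .
  have disj: "cshift n s ` (T ! r) \<inter> cshift n s ` (T ! r') = cshift n s ` (T ! r \<inter> T ! r')"
    if "r < length T" "r' < length T" for r r'
    using inj_on_image_Int[OF inj_on_cshift] tabloid_row_subset[OF T] that by blast
  have "(\<Union>r < length T. cshift n s ` (T ! r)) = cshift n s ` (\<Union>r < length T. T ! r)"
    by (simp add: image_UN)
  also have "\<dots> = {0..<n}"
    using T cshift_image[OF \<open>0 < n\<close>] unfolding is_tabloid_def by (metis (no_types))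
  finally have "(\<Union>r < length T. cshift n s ` (T ! r)) = {0..<n}" .
  then show ?thesis
    unfolding is_tabloid_def
  proof (intro conjI allI impI)
    fix r assume "r < length (shift_tabloid n s T)"
    then show "card (shift_tabloid n s T ! r) = lam ! r"
      using T inj unfolding is_tabloid_def by (simp add: card_image)
  next
    fix r r' assume "r < length (shift_tabloid n s T)" "r' < length (shift_tabloid n s T)" "r \<noteq> r'"
    then show "shift_tabloid n s T ! r \<inter> shift_tabloid n s T ! r' = {}"
      using T disj unfolding is_tabloid_def by simp
  qed (use T tabloid_length in simp_all)
qed

lemma row_of_shift_tabloid:
  assumes "is_tabloid n lam T" "0 < n" "y < n"
  shows "row_of (shift_tabloid n s T) (cshift n s y) = row_of T y"
proof -
  have "row_of T y < length T" "cshift n s y \<in> shift_tabloid n s T ! row_of T y"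
    using row_of_mem[OF assms(1,3)] by simp_all
  then show ?thesis
    using row_of_eqI[OF is_tabloid_shift_tabloid[OF assms(1,2)]] by simp
qed

lemma tau_shift_tabloid:
  assumes T: "is_tabloid n lam T" and n: "0 < n"
  shows "tau n (shift_tabloid n s T) = cshift n s ` tau n T"
proof (rule set_eqI)
  fix z
  show "z \<in> tau n (shift_tabloid n s T) \<longleftrightarrow> z \<in> cshift n s ` tau n T"
  proof (cases "z < n")
    case True
    then obtain y where y: "y < n" "z = cshift n s y"
      using cshift_image[OF n] by (metis atLeastLessThan_iff imageE zero_le)
    have "cshift n s y \<in> tau n (shift_tabloid n s T) \<longleftrightarrow> y \<in> tau n T"
      using y(1) n row_of_shift_tabloid[OF T n, of y s] row_of_shift_tabloid[OF T n, of "Suc y mod n" s]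
      by (simp add: tau_def cshift_Suc_mod cshift_less)
    moreover have "cshift n s y \<in> cshift n s ` tau n T \<longleftrightarrow> y \<in> tau n T"
      using inj_on_image_mem_iff[OF inj_on_cshift _ tau_subset] y(1) by simp
    ultimately show ?thesis
      using y(2) by simp
  next
    case False
    then show ?thesis
      using tau_subset cshift_less[OF n] by (auto simp: tau_def)
  qed
qed

lemma exch_shift_tabloid:
  assumes T: "is_tabloid n lam T" and "0 < n" "x < n"
  shows "exch n (cshift n s x) (shift_tabloid n s T) = shift_tabloid n s (exch n x T)"
proof -
  have "Transposition.transpose (cshift n s x) ((cshift n s x + 1) mod n) ` cshift n s ` R
      = cshift n s ` Transposition.transpose x ((x + 1) mod n) ` R" if "R \<subseteq> {0..<n}" for R
    unfolding image_image
  proof (rule image_cong)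
    fix y assume "y \<in> R"
    then show "Transposition.transpose (cshift n s x) ((cshift n s x + 1) mod n) (cshift n s y)
        = cshift n s (Transposition.transpose x ((x + 1) mod n) y)"
      using that cshift_transpose[OF assms(2,3)] by auto
  qed simp
  then show ?thesis
    using tabloid_rows_subset[OF T] unfolding exch_eq_transpose shift_tabloid_def map_map o_def
    by (intro map_cong) simp_all
qed

lemma knuth_move_shift_tabloid:
  assumes move: "knuth_move n lam T T'" and n: "0 < n"
  shows "knuth_move n lam (shift_tabloid n s T) (shift_tabloid n s T')"
proof -
  obtain x where x: "x < n" "T' = exch n x T"
    using move unfolding knuth_move_def by blast
  have T: "is_tabloid n lam T" "is_tabloid n lam T'"
    using move unfolding knuth_move_def by blast+
  have "cshift n s ` A \<subseteq> cshift n s ` B \<longleftrightarrow> A \<subseteq> B" if "A \<subseteq> {0..<n}" "B \<subseteq> {0..<n}" for A B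
    using that inj_on_cshift[of n s] unfolding inj_on_def by blast
  then have "\<not> tau n (shift_tabloid n s T) \<subseteq> tau n (shift_tabloid n s T')
      \<and> \<not> tau n (shift_tabloid n s T') \<subseteq> tau n (shift_tabloid n s T)"
    using move tau_shift_tabloid[OF T(1) n] tau_shift_tabloid[OF T(2) n] tau_subset
    unfolding knuth_move_def by simp
  moreover have "shift_tabloid n s T' = exch n (cshift n s x) (shift_tabloid n s T)"
    using exch_shift_tabloid[OF T(1) n x(1)] x(2) by simp
  ultimately show ?thesis
    using is_tabloid_shift_tabloid[OF T(1) n] is_tabloid_shift_tabloid[OF T(2) n] cshift_less[OF n, of s x]
    unfolding knuth_move_def by blast
qed

lemma rtranclp_knuth_move_shift_tabloid:
  "(knuth_move n lam)\<^sup>*\<^sup>* T T' \<Longrightarrow> 0 < n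
    \<Longrightarrow> (knuth_move n lam)\<^sup>*\<^sup>* (shift_tabloid n s T) (shift_tabloid n s T')"
  by (induction rule: rtranclp_induct) (auto intro: rtranclp.rtrancl_into_rtrancl knuth_move_shift_tabloid)

lemma cshift_cls:
  assumes "0 < n"
  shows "cshift n s (cls n z) = cls n (z + int s)"
proof -
  have "int (cshift n s (cls n z)) = (z + int s) mod int n"
    using assms by (simp add: cshift_def cls_def of_nat_mod mod_simps)
  then show ?thesis
    unfolding cls_def by (metis nat_int)
qed

lemma shift_tabloid_rev_row_superstd:
  "0 < n \<Longrightarrow> shift_tabloid n s (rev_row_superstd n lam i) = rev_row_superstd n lam (i + int s)"
  unfolding rev_row_superstd_def shift_tabloid_def setcompr_eq_image map_map o_def image_image
  by (intro map_cong refl image_cong) (simp_all add: cshift_cls ac_simps)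

lemma shift_tabloid_col_superstd:
  "0 < n \<Longrightarrow> shift_tabloid n s (col_superstd n lam i) = col_superstd n lam (i + int s)"
  unfolding col_superstd_def shift_tabloid_def setcompr_eq_image map_map o_def image_image
  by (intro map_cong refl image_cong) (simp_all add: cshift_cls ac_simps)

lemma rev_row_superstd_mod:
  "rev_row_superstd n lam (i mod int n) = rev_row_superstd n lam i"
  unfolding rev_row_superstd_def cls_def by (simp add: mod_simps add.assoc)

section \<open>Row words\<close>

definition word_tabloid :: "nat \<Rightarrow> nat list \<Rightarrow> nat set list" where
  "word_tabloid k w = map (\<lambda>r. {j. j < length w \<and> w ! j = r}) [0..<k]"

definition is_row_word :: "nat \<Rightarrow> nat list \<Rightarrow> nat list \<Rightarrow> bool" where
  "is_row_word n lam w \<longleftrightarrow> length w = n \<and> set w \<subseteq> {..<length lam}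
     \<and> (\<forall>r < length lam. count (mset w) r = lam ! r)"

definition swap_at :: "nat \<Rightarrow> 'a list \<Rightarrow> 'a list" where
  "swap_at j w = w[j := w ! Suc j, Suc j := w ! j]"

lemma length_word_tabloid [simp]: "length (word_tabloid k w) = k"
  by (simp add: word_tabloid_def)

lemma nth_word_tabloid [simp]: "r < k \<Longrightarrow> word_tabloid k w ! r = {j. j < length w \<and> w ! j = r}"
  by (simp add: word_tabloid_def)

lemma card_positions: "card {j. j < length w \<and> w ! j = r} = count (mset w) r"
  by (simp add: count_mset count_list_eq_length_filter length_filter_conv_card eq_commute)

lemma is_tabloid_word_tabloid:
  assumes "is_row_word n lam w"
  shows "is_tabloid n lam (word_tabloid (length lam) w)"
proof -
  have "(\<Union>r < length lam. {j. j < length w \<and> w ! j = r}) = {0..<n}"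
    using assms nth_mem unfolding is_row_word_def by fastforce
  then show ?thesis
    using assms unfolding is_tabloid_def is_row_word_def by (auto simp: card_positions)
qed

lemma row_of_word_tabloid: "j < length w \<Longrightarrow> w ! j < k \<Longrightarrow> row_of (word_tabloid k w) j = w ! j"
  unfolding row_of_def by (rule the_equality) auto

lemma tau_word_tabloid:
  assumes "is_row_word n lam w"
  shows "tau n (word_tabloid (length lam) w) = {j. j < n \<and> w ! j < w ! (Suc j mod n)}"
proof -
  have "row_of (word_tabloid (length lam) w) j = w ! j" if "j < n" for j
    using assms that nth_mem row_of_word_tabloid unfolding is_row_word_def by blast
  moreover have "Suc j mod n < n" if "j < n" for j
    using that by simp
  ultimately show ?thesis
    unfolding tau_def by auto
qed

lemma ex_row_word:
  assumes T: "is_tabloid n lam T"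
  obtains w where "is_row_word n lam w" "T = word_tabloid (length lam) w"
proof
  define w where "w = map (row_of T) [0..<n]"
  have len: "length T = length lam"
    using tabloid_length[OF T] .
  have rows: "T ! r = {j. j < length w \<and> w ! j = r}" if r: "r < length lam" for r
  proof (intro set_eqI iffI)
    fix j assume "j \<in> T ! r"
    moreover have "j < n"
      using tabloid_row_subset[OF T, of r] r len \<open>j \<in> T ! r\<close> by auto
    ultimately show "j \<in> {j. j < length w \<and> w ! j = r}"
      using row_of_eqI[OF T] r len by (simp add: w_def)
  next
    fix j assume "j \<in> {j. j < length w \<and> w ! j = r}"
    then show "j \<in> T ! r"
      using row_of_mem[OF T] by (auto simp: w_def)
  qed
  show "T = word_tabloid (length lam) w"
    by (rule nth_equalityI) (simp_all add: rows len)
  have "set w \<subseteq> {..<length lam}"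
    using row_of_mem[OF T] len by (auto simp: w_def)
  moreover have "count (mset w) r = lam ! r" if "r < length lam" for r
    using T rows[OF that] that len card_positions[of w r] unfolding is_tabloid_def by metis
  ultimately show "is_row_word n lam w"
    unfolding is_row_word_def by (simp add: w_def)
qed

lemma length_swap_at [simp]: "length (swap_at j w) = length w"
  by (simp add: swap_at_def)

lemma mset_swap_at [simp]: "Suc j < length w \<Longrightarrow> mset (swap_at j w) = mset w"
  using mset_swap[of "Suc j" w j] by (simp add: swap_at_def)

lemma nth_swap_at:
  "Suc j < length w \<Longrightarrow> i < length w \<Longrightarrow> swap_at j w ! i = w ! Transposition.transpose j (Suc j) i"
  by (auto simp: swap_at_def nth_list_update transpose_def)

lemma swap_at_eq_append:
  "Suc j < length w \<Longrightarrow> swap_at j w = take j w @ w ! Suc j # w ! j # drop (Suc (Suc j)) w"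
  unfolding swap_at_def by (simp add: upd_conv_take_nth_drop Cons_nth_drop_Suc list_update_append)

lemma is_row_word_swap_at: "is_row_word n lam w \<Longrightarrow> Suc j < n \<Longrightarrow> is_row_word n lam (swap_at j w)"
  unfolding is_row_word_def by (metis mset_swap_at set_mset_mset length_swap_at)

lemma exch_word_tabloid:
  assumes "Suc j < length w"
  shows "exch (length w) j (word_tabloid k w) = word_tabloid k (swap_at j w)"
proof -
  let ?t = "Transposition.transpose j (Suc j)"
  have "?t ` {i. i < length w \<and> w ! i = r} = {i. i < length w \<and> swap_at j w ! i = r}" for r
    using assms by (auto simp: in_transpose_image_iff nth_swap_at transpose_def)
  moreover have "Suc j mod length w = Suc j"
    using assms by simp
  ultimately show ?thesis
    unfolding exch_eq_transpose word_tabloid_def by simp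
qed

lemma word_tabloid_rotate:
  assumes "Suc (length w) = n"
  shows "word_tabloid k (w @ [x]) = shift_tabloid n (n - 1) (word_tabloid k (x # w))"
proof -
  have n: "0 < n" using assms by simp
  have letter: "(w @ [x]) ! cshift n (n - 1) j = (x # w) ! j" if "j < n" for j
    using that assms by (cases j) (auto simp: cshift_def nth_append)
  have "cshift n (n - 1) ` {j. j < n \<and> (x # w) ! j = r} = {i. i < n \<and> (w @ [x]) ! i = r}" for r
  proof
    show "cshift n (n - 1) ` {j. j < n \<and> (x # w) ! j = r} \<subseteq> {i. i < n \<and> (w @ [x]) ! i = r}"
    proof (rule image_subsetI)
      fix j assume "j \<in> {j. j < n \<and> (x # w) ! j = r}"
      then show "cshift n (n - 1) j \<in> {i. i < n \<and> (w @ [x]) ! i = r}"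
        using letter cshift_less[OF n] by simp
    qed
    show "{i. i < n \<and> (w @ [x]) ! i = r} \<subseteq> cshift n (n - 1) ` {j. j < n \<and> (x # w) ! j = r}"
    proof
      fix i assume i: "i \<in> {i. i < n \<and> (w @ [x]) ! i = r}"
      then have "i \<in> cshift n (n - 1) ` {0..<n}"
        using cshift_image[OF n] by simp
      then obtain j where "j < n" "i = cshift n (n - 1) j"
        by auto
      with i letter show "i \<in> cshift n (n - 1) ` {j. j < n \<and> (x # w) ! j = r}"
        by auto
    qed
  qed
  then show ?thesis
    using assms unfolding word_tabloid_def shift_tabloid_def by simp
qed

lemma knuth_move_word_tabloid:
  assumes w: "is_row_word n lam w" and j: "Suc j < n"
    and "a < n" "w ! a < w ! (Suc a mod n)" "\<not> swap_at j w ! a < swap_at j w ! (Suc a mod n)"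
    and "b < n" "\<not> w ! b < w ! (Suc b mod n)" "swap_at j w ! b < swap_at j w ! (Suc b mod n)"
  shows "knuth_move n lam (word_tabloid (length lam) w) (word_tabloid (length lam) (swap_at j w))"
proof -
  have w': "is_row_word n lam (swap_at j w)"
    using is_row_word_swap_at[OF w j] .
  have "length w = n"
    using w unfolding is_row_word_def by simp
  then have "word_tabloid (length lam) (swap_at j w) = exch n j (word_tabloid (length lam) w)"
    using exch_word_tabloid[of j w "length lam"] j by simp
  moreover have "a \<in> tau n (word_tabloid (length lam) w) - tau n (word_tabloid (length lam) (swap_at j w))"
    "b \<in> tau n (word_tabloid (length lam) (swap_at j w)) - tau n (word_tabloid (length lam) w)"
    using assms(3-8) by (simp_all add: tau_word_tabloid[OF w] tau_word_tabloid[OF w'])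
  ultimately show ?thesis
    unfolding knuth_move_def using Suc_lessD[OF j] is_tabloid_word_tabloid[OF w] is_tabloid_word_tabloid[OF w']
    by blast
qed

lemma knuth_move_swap_at_right:
  assumes w: "is_row_word n lam w" and j: "Suc (Suc j) < n" and "w ! j \<noteq> w ! Suc j"
    and "min (w ! j) (w ! Suc j) < w ! Suc (Suc j)" "w ! Suc (Suc j) \<le> max (w ! j) (w ! Suc j)"
  shows "knuth_move n lam (word_tabloid (length lam) w) (word_tabloid (length lam) (swap_at j w))"
proof -
  have "length w = n"
    using w unfolding is_row_word_def by simp
  then have nth: "swap_at j w ! j = w ! Suc j" "swap_at j w ! Suc j = w ! j"
    "swap_at j w ! Suc (Suc j) = w ! Suc (Suc j)"
    using j by (simp_all add: swap_at_def)
  have mod: "Suc j mod n = Suc j" "Suc (Suc j) mod n = Suc (Suc j)"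
    using j by simp_all
  show ?thesis
  proof (cases "w ! j < w ! Suc j")
    case True
    then show ?thesis
      using knuth_move_word_tabloid[OF w, of j j "Suc j"] assms nth mod by simp
  next
    case False
    then show ?thesis
      using knuth_move_word_tabloid[OF w, of j "Suc j" j] assms nth mod by simp
  qed
qed

lemma knuth_move_swap_at_left:
  assumes w: "is_row_word n lam w" and j: "Suc (Suc j) < n" and "w ! Suc j \<noteq> w ! Suc (Suc j)"
    and "min (w ! Suc j) (w ! Suc (Suc j)) \<le> w ! j" "w ! j < max (w ! Suc j) (w ! Suc (Suc j))"
  shows "knuth_move n lam (word_tabloid (length lam) w) (word_tabloid (length lam) (swap_at (Suc j) w))"
proof -
  have "length w = n"
    using w unfolding is_row_word_def by simp
  then have nth: "swap_at (Suc j) w ! j = w ! j" "swap_at (Suc j) w ! Suc j = w ! Suc (Suc j)"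
    "swap_at (Suc j) w ! Suc (Suc j) = w ! Suc j"
    using j by (simp_all add: swap_at_def)
  have mod: "Suc j mod n = Suc j" "Suc (Suc j) mod n = Suc (Suc j)"
    using j by simp_all
  show ?thesis
  proof (cases "w ! Suc j < w ! Suc (Suc j)")
    case True
    then show ?thesis
      using knuth_move_word_tabloid[OF w, of "Suc j" "Suc j" j] assms nth mod by simp
  next
    case False
    then show ?thesis
      using knuth_move_word_tabloid[OF w, of "Suc j" j "Suc j"] assms nth mod by simp
  qed
qed

section \<open>Suffix excesses and the potential\<close>

definition excess :: "nat \<Rightarrow> nat list \<Rightarrow> int" where
  "excess v w = int (count (mset w) v) - int (count (mset w) (Suc v))"

fun max_suffix_excess :: "nat \<Rightarrow> nat list \<Rightarrow> int" where
  "max_suffix_excess v [] = 0"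
| "max_suffix_excess v (a # w) = max (max_suffix_excess v w) (excess v (a # w))"

lemma excess_Cons: "excess v (a # w) = (if a = v then 1 else if a = Suc v then -1 else 0) + excess v w"
  by (simp add: excess_def)

lemma excess_le_max_suffix_excess: "excess v w \<le> max_suffix_excess v w"
  by (cases w) (auto simp: excess_def)

lemma max_suffix_excess_nonneg: "0 \<le> max_suffix_excess v w"
  by (induction w) auto

lemma max_suffix_excess_le_length: "max_suffix_excess v w \<le> int (length w)"
proof (induction w)
  case (Cons a w)
  have "excess v (a # w) \<le> int (length (a # w))"
    unfolding excess_def using count_le_size[of "mset (a # w)" v] by simp
  with Cons show ?case by simp
qed simp

lemma max_suffix_excess_snoc:
  "max_suffix_excess v (w @ [a]) = max 0 (max_suffix_excess v w + excess v [a])"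
  by (induction w) (auto simp: excess_def max_def)

lemma max_suffix_excess_append_cong:
  "max_suffix_excess v X = max_suffix_excess v Y \<Longrightarrow> mset X = mset Y
    \<Longrightarrow> max_suffix_excess v (u @ X) = max_suffix_excess v (u @ Y)"
  by (induction u) (simp_all add: excess_def)

lemma max_suffix_excess_swap_right:
  assumes "p \<noteq> q" "min p q < d" "d \<le> max p q"
  shows "max_suffix_excess v (p # q # d # t) = max_suffix_excess v (q # p # d # t)"
  using excess_le_max_suffix_excess[of v t] assms by (auto simp: excess_Cons max_def)

lemma max_suffix_excess_swap_left:
  assumes "p \<noteq> q" "min p q \<le> a" "a < max p q"
  shows "max_suffix_excess v (a # p # q # t) = max_suffix_excess v (a # q # p # t)"
  using excess_le_max_suffix_excess[of v t] assms by (auto simp: excess_Cons max_def)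

lemma max_suffix_excess_swap_at_right:
  assumes "Suc (Suc j) < length w" "w ! j \<noteq> w ! Suc j"
    "min (w ! j) (w ! Suc j) < w ! Suc (Suc j)" "w ! Suc (Suc j) \<le> max (w ! j) (w ! Suc j)"
  shows "max_suffix_excess v (swap_at j w) = max_suffix_excess v w"
proof -
  let ?t = "drop (Suc (Suc (Suc j))) w"
  have "w = take j w @ w ! j # w ! Suc j # w ! Suc (Suc j) # ?t"
    using assms(1) by (simp add: Cons_nth_drop_Suc)
  moreover have "swap_at j w = take j w @ w ! Suc j # w ! j # w ! Suc (Suc j) # ?t"
    using assms(1) by (simp add: swap_at_eq_append Cons_nth_drop_Suc)
  ultimately show ?thesis
    using max_suffix_excess_append_cong max_suffix_excess_swap_right[OF assms(2-4)]
    by (metis mset_swap_at add_mset_commute mset.simps(2))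
qed

lemma max_suffix_excess_swap_at_left:
  assumes "Suc (Suc j) < length w" "w ! Suc j \<noteq> w ! Suc (Suc j)"
    "min (w ! Suc j) (w ! Suc (Suc j)) \<le> w ! j" "w ! j < max (w ! Suc j) (w ! Suc (Suc j))"
  shows "max_suffix_excess v (swap_at (Suc j) w) = max_suffix_excess v w"
proof -
  let ?t = "drop (Suc (Suc (Suc j))) w"
  have "w = take j w @ w ! j # w ! Suc j # w ! Suc (Suc j) # ?t"
    using assms(1) by (simp add: Cons_nth_drop_Suc)
  moreover have "swap_at (Suc j) w = take j w @ w ! j # w ! Suc (Suc j) # w ! Suc j # ?t"
    using assms(1) by (simp add: swap_at_eq_append take_Suc_conv_app_nth)
  ultimately show ?thesis
    using max_suffix_excess_append_cong max_suffix_excess_swap_left[OF assms(2-4)]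
    by (metis add_mset_commute mset.simps(2))
qed

definition potential :: "nat \<Rightarrow> nat list \<Rightarrow> int" where
  "potential k w = (\<Sum>v<k. int (k - v) * max_suffix_excess v w)"

lemma potential_le: "potential k w \<le> int (k * k * length w)"
proof -
  have "potential k w \<le> (\<Sum>v<k. int k * int (length w))"
    unfolding potential_def
  proof (rule sum_mono)
    fix v
    have "int (k - v) * max_suffix_excess v w \<le> int (k - v) * int (length w)"
      using max_suffix_excess_le_length by (simp add: mult_left_mono)
    also have "\<dots> \<le> int k * int (length w)"
      by (simp add: mult_right_mono)
    finally show "int (k - v) * max_suffix_excess v w \<le> int k * int (length w)" .
  qed
  then show ?thesis
    by simp
qed

text \<open>Moving x to the front raises the maximal suffix excess of x - 1 by at least one, lowers
  that of x by at most one and leaves the others unchanged; the weights k - v decrease in v.\<close>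

lemma potential_rotate:
  assumes p: "is_partition n lam" and w: "is_row_word n lam (u @ [x])" and x: "0 < x"
  shows "potential (length lam) (u @ [x]) < potential (length lam) (x # u)"
proof -
  let ?k = "length lam"
  define D where "D v = max_suffix_excess v (x # u) - max_suffix_excess v (u @ [x])" for v
  have xk: "x < ?k"
    using w unfolding is_row_word_def by simp
  have "lam ! x \<le> lam ! (x - 1)"
    using p xk x sorted_wrt_nth_less[of "(\<ge>)" lam "x - 1" x] unfolding is_partition_def by simp
  moreover have cnt: "\<forall>r < ?k. count (mset (u @ [x])) r = lam ! r"
    using w unfolding is_row_word_def by blast
  then have "count (mset (u @ [x])) (x - 1) = lam ! (x - 1)" "count (mset (u @ [x])) x = lam ! x"
    using xk by (simp_all only: less_imp_diff_less)
  then have "count (mset u) (x - 1) = lam ! (x - 1)" "count (mset u) x + 1 = lam ! x"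
    using x by (auto split: if_splits)
  ultimately have "1 \<le> excess (x - 1) u"
    using x by (simp add: excess_def)
  then have D_pred: "1 \<le> D (x - 1)"
    using excess_le_max_suffix_excess[of "x - 1" u] x
    by (simp add: D_def max_suffix_excess_snoc excess_def)
  have D_x: "-1 \<le> D x"
    using max_suffix_excess_nonneg[of x u] by (simp add: D_def max_suffix_excess_snoc excess_def)
  have D_other: "D v = 0" if "v \<noteq> x - 1" "v \<noteq> x" for v
    using that x max_suffix_excess_nonneg[of v u] excess_le_max_suffix_excess[of v u]
    by (simp add: D_def max_suffix_excess_snoc excess_def)
  have "potential ?k (x # u) - potential ?k (u @ [x]) = (\<Sum>v<?k. int (?k - v) * D v)"
    unfolding potential_def D_def by (simp add: sum_subtractf right_diff_distrib)
  also have "\<dots> = (\<Sum>v\<in>{x - 1, x}. int (?k - v) * D v)"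
    by (rule sum.mono_neutral_cong_right) (use xk D_other in auto)
  also have "\<dots> = int (?k - (x - 1)) * D (x - 1) + int (?k - x) * D x"
    using x by simp
  also have "\<dots> \<ge> int (?k - (x - 1)) * 1 + int (?k - x) * (-1)"
    using mult_left_mono[OF D_pred, of "int (?k - (x - 1))"] mult_left_mono[OF D_x, of "int (?k - x)"]
    by simp
  finally show ?thesis
    using x xk by simp
qed

lemma potential_swap_at_right:
  assumes "Suc (Suc j) < length w" "w ! j \<noteq> w ! Suc j"
    "min (w ! j) (w ! Suc j) < w ! Suc (Suc j)" "w ! Suc (Suc j) \<le> max (w ! j) (w ! Suc j)"
  shows "potential k (swap_at j w) = potential k w"
  unfolding potential_def using max_suffix_excess_swap_at_right[OF assms] by simp

lemma potential_swap_at_left: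
  assumes "Suc (Suc j) < length w" "w ! Suc j \<noteq> w ! Suc (Suc j)"
    "min (w ! Suc j) (w ! Suc (Suc j)) \<le> w ! j" "w ! j < max (w ! Suc j) (w ! Suc (Suc j))"
  shows "potential k (swap_at (Suc j) w) = potential k w"
  unfolding potential_def using max_suffix_excess_swap_at_left[OF assms] by simp

section \<open>Sorting a row word\<close>

lemma sorted_desc_le_nth_iff:
  "sorted_wrt (\<ge>) (w :: nat list) \<Longrightarrow> j < length w \<Longrightarrow> m \<le> w ! j \<longleftrightarrow> j < length (filter ((\<le>) m) w)"
proof (induction w arbitrary: j)
  case (Cons a w)
  show ?case
  proof (cases "m \<le> a")
    case True
    then show ?thesis
      using Cons by (cases j) auto
  next
    case False
    then have "\<forall>y \<in> set (a # w). \<not> m \<le> y"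
      using Cons.prems(1) by auto
    then show ?thesis
      using Cons.prems(2) nth_mem[of j "a # w"] by (auto simp: filter_empty_conv)
  qed
qed simp

lemma length_filter_ge_eq_sum_count:
  "set (w :: nat list) \<subseteq> {..<k} \<Longrightarrow> length (filter ((\<le>) m) w) = (\<Sum>v\<in>{m..<k}. count (mset w) v)"
proof (induction w)
  case (Cons a w)
  have "(\<Sum>v\<in>{m..<k}. count (mset (a # w)) v) = (\<Sum>v\<in>{m..<k}. count (mset w) v + (if a = v then 1 else 0))"
    by (intro sum.cong) auto
  also have "\<dots> = (\<Sum>v\<in>{m..<k}. count (mset w) v) + (if a \<in> {m..<k} then 1 else 0)"
    by (simp add: sum.distrib)
  finally show ?case
    using Cons by simp
qed simp

lemma sum_list_drop_eq_sum_nth: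
  "m \<le> length xs \<Longrightarrow> sum_list (drop m xs) = (\<Sum>v\<in>{m..<length xs}. xs ! v)"
proof (induction xs arbitrary: m)
  case (Cons a xs)
  then show ?case
    by (cases m) (simp_all add: sum_list_sum_nth sum.shift_bounds_Suc_ivl atLeast0LessThan del: sum.op_ivl_Suc)
qed simp

lemma length_filter_ge_row_word:
  assumes "is_row_word n lam w" "m \<le> length lam"
  shows "length (filter ((\<le>) m) w) = sum_list (drop m lam)"
  using assms length_filter_ge_eq_sum_count[of w "length lam" m] sum_list_drop_eq_sum_nth[of m lam]
  unfolding is_row_word_def by simp

lemma sum_list_drop_le: "sum_list (drop m xs) \<le> sum_list (xs :: nat list)"
  by (metis append_take_drop_id le_add2 sum_list_append)

lemma nth_rev_row_superstd_0:
  assumes "is_partition n lam" "r < length lam"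
  shows "rev_row_superstd n lam 0 ! r = {sum_list (drop (Suc r) lam)..<sum_list (drop r lam)}"
proof -
  have split: "sum_list (drop r lam) = sum_list (drop (Suc r) lam) + lam ! r"
    using assms(2) by (simp add: Cons_nth_drop_Suc[symmetric])
  moreover have "sum_list (drop r lam) \<le> n"
    using assms(1) sum_list_drop_le unfolding is_partition_def by metis
  ultimately have "cls n (int (sum_list (drop (Suc r) lam)) + int t) = sum_list (drop (Suc r) lam) + t"
    if "t < lam ! r" for t
    using that unfolding cls_def by (simp flip: of_nat_add of_nat_mod)
  then have "rev_row_superstd n lam 0 ! r = (\<lambda>t. sum_list (drop (Suc r) lam) + t) ` {..<lam ! r}"
    using assms(2) unfolding rev_row_superstd_def setcompr_eq_image by (auto simp: image_iff)
  also have "\<dots> = {sum_list (drop (Suc r) lam)..<sum_list (drop r lam)}"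
    using split by (simp add: lessThan_atLeast0 ac_simps)
  finally show ?thesis .
qed

lemma word_tabloid_sorted:
  assumes p: "is_partition n lam" and w: "is_row_word n lam w" and s: "sorted_wrt (\<ge>) w"
  shows "word_tabloid (length lam) w = rev_row_superstd n lam 0"
proof (rule nth_equalityI)
  fix r assume "r < length (word_tabloid (length lam) w)"
  then have r: "r < length lam"
    by simp
  let ?L = "\<lambda>m. sum_list (drop m lam)"
  have len: "length w = n"
    using w unfolding is_row_word_def by simp
  have "?L r \<le> n"
    using p sum_list_drop_le unfolding is_partition_def by metis
  moreover have iff: "w ! j = r \<longleftrightarrow> j < ?L r \<and> \<not> j < ?L (Suc r)" if "j < length w" for j
    using sorted_desc_le_nth_iff[OF s that, of r] sorted_desc_le_nth_iff[OF s that, of "Suc r"]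
      length_filter_ge_row_word[OF w] r by auto
  ultimately have "{j. j < length w \<and> w ! j = r} = {?L (Suc r)..<?L r}"
  proof (intro set_eqI iffI)
    fix j assume "j \<in> {j. j < length w \<and> w ! j = r}"
    then show "j \<in> {?L (Suc r)..<?L r}"
      using iff[of j] by simp
  next
    fix j assume "j \<in> {?L (Suc r)..<?L r}"
    moreover from this have "j < length w"
      using \<open>?L r \<le> n\<close> len by simp
    ultimately show "j \<in> {j. j < length w \<and> w ! j = r}"
      using iff[of j] by simp
  qed
  then show "word_tabloid (length lam) w ! r = rev_row_superstd n lam 0 ! r"
    using nth_rev_row_superstd_0[OF p r] r by simp
qed (simp add: rev_row_superstd_def)

text \<open>An ascent p < q followed by r moves one step to the right: if q < r there is nothing to do,
  if p < r \<le> q the swap of p, q is a Knuth move witnessed by r, and if r \<le> p the swap of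
  q, r is one witnessed by p.\<close>

lemma ascent_move_right:
  assumes w: "is_row_word n lam w" and j: "Suc (Suc j) < n" and asc: "w ! j < w ! Suc j"
  obtains w' where "(knuth_move n lam)\<^sup>*\<^sup>* (word_tabloid (length lam) w) (word_tabloid (length lam) w')"
    "is_row_word n lam w'" "potential (length lam) w' = potential (length lam) w"
    "w' ! Suc j < w' ! Suc (Suc j)"
proof -
  have len: "length w = n"
    using w unfolding is_row_word_def by simp
  consider "w ! Suc j < w ! Suc (Suc j)"
    | "w ! j < w ! Suc (Suc j)" "w ! Suc (Suc j) \<le> w ! Suc j"
    | "w ! Suc (Suc j) \<le> w ! j"
    by linarith
  then show ?thesis
  proof cases
    case 1
    then show ?thesis
      using that w by blast
  next
    case 2
    have "knuth_move n lam (word_tabloid (length lam) w) (word_tabloid (length lam) (swap_at j w))"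
      using knuth_move_swap_at_right[OF w j] asc 2 by simp
    moreover have "potential (length lam) (swap_at j w) = potential (length lam) w"
      using potential_swap_at_right asc 2 j len by simp
    moreover have "swap_at j w ! Suc j < swap_at j w ! Suc (Suc j)"
      using 2 j len by (simp add: swap_at_def)
    ultimately show ?thesis
      using that is_row_word_swap_at[OF w] j by (meson Suc_lessD r_into_rtranclp)
  next
    case 3
    have "knuth_move n lam (word_tabloid (length lam) w) (word_tabloid (length lam) (swap_at (Suc j) w))"
      using knuth_move_swap_at_left[OF w j] asc 3 by simp
    moreover have "potential (length lam) (swap_at (Suc j) w) = potential (length lam) w"
      using potential_swap_at_left asc 3 j len by simp
    moreover have "swap_at (Suc j) w ! Suc j < swap_at (Suc j) w ! Suc (Suc j)"
      using asc 3 j len by (simp add: swap_at_def)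
    ultimately show ?thesis
      using that is_row_word_swap_at[OF w j] by (meson r_into_rtranclp)
  qed
qed

lemma ascent_move_to_end:
  assumes "is_row_word n lam w" "Suc j < n" "w ! j < w ! Suc j"
  obtains w' where "(knuth_move n lam)\<^sup>*\<^sup>* (word_tabloid (length lam) w) (word_tabloid (length lam) w')"
    "is_row_word n lam w'" "potential (length lam) w' = potential (length lam) w"
    "w' ! (n - 2) < w' ! (n - 1)"
  using assms
proof (induction "n - Suc j" arbitrary: j w thesis rule: less_induct)
  case less
  show ?case
  proof (cases "Suc (Suc j) < n")
    case True
    obtain w1 where w1: "(knuth_move n lam)\<^sup>*\<^sup>* (word_tabloid (length lam) w) (word_tabloid (length lam) w1)"
      "is_row_word n lam w1" "potential (length lam) w1 = potential (length lam) w"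
      "w1 ! Suc j < w1 ! Suc (Suc j)"
      using ascent_move_right[OF less.prems(2) True less.prems(4)] .
    have "n - Suc (Suc j) < n - Suc j"
      using True by simp
    then obtain w' where "(knuth_move n lam)\<^sup>*\<^sup>* (word_tabloid (length lam) w1) (word_tabloid (length lam) w')"
      "is_row_word n lam w'" "potential (length lam) w' = potential (length lam) w1"
      "w' ! (n - 2) < w' ! (n - 1)"
      using less.hyps[OF _ _ w1(2) True w1(4)] by blast
    then show ?thesis
      using less.prems(1) w1(1,3) by (metis rtranclp_trans)
  next
    case False
    then have "j = n - 2" "Suc j = n - 1"
      using less.prems by auto
    then show ?thesis
      using less.prems by auto
  qed
qed

lemma rotate_final_ascent:
  assumes p: "is_partition n lam" and w: "is_row_word n lam w"
    and n: "2 \<le> n" and asc: "w ! (n - 2) < w ! (n - 1)"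
  obtains u x where "w = u @ [x]" "Suc (length u) = n" "is_row_word n lam (x # u)"
    "potential (length lam) w < potential (length lam) (x # u)"
proof -
  define u where "u = butlast w"
  define x where "x = last w"
  have "length w = n"
    using w unfolding is_row_word_def by simp
  with n have "w \<noteq> []"
    by auto
  with n \<open>length w = n\<close> have w_eq: "w = u @ [x]" and u: "Suc (length u) = n"
    by (simp_all add: u_def x_def)
  have "w ! (n - 1) = x"
    using w_eq u nth_append_length[of u x] by (metis diff_Suc_1)
  with asc have "0 < x"
    by simp
  then have "potential (length lam) w < potential (length lam) (x # u)"
    using potential_rotate[OF p, of u x] w w_eq by simp
  moreover have "is_row_word n lam (x # u)"
    using w w_eq unfolding is_row_word_def by auto
  ultimately show ?thesis
    using that w_eq u by blast
qed

lemma rev_row_superstd_reachable_snoc: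
  assumes u: "Suc (length u) = n"
    and "(knuth_move n lam)\<^sup>*\<^sup>* (word_tabloid k (x # u)) (rev_row_superstd n lam i)"
  shows "(knuth_move n lam)\<^sup>*\<^sup>* (word_tabloid k (u @ [x])) (rev_row_superstd n lam (i + int (n - 1)))"
proof -
  have n: "0 < n"
    using u by simp
  have "(knuth_move n lam)\<^sup>*\<^sup>* (shift_tabloid n (n - 1) (word_tabloid k (x # u)))
      (shift_tabloid n (n - 1) (rev_row_superstd n lam i))"
    using rtranclp_knuth_move_shift_tabloid[OF assms(2) n] .
  then show ?thesis
    by (simp add: word_tabloid_rotate[OF u] shift_tabloid_rev_row_superstd[OF n])
qed

lemma row_word_reaches_rev_row_superstd:
  assumes p: "is_partition n lam" and "is_row_word n lam w"
  shows "\<exists>i. (knuth_move n lam)\<^sup>*\<^sup>* (word_tabloid (length lam) w) (rev_row_superstd n lam i)"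
  using assms(2)
proof (induction "nat (int (length lam * length lam * n) - potential (length lam) w)"
    arbitrary: w rule: less_induct)
  case less
  let ?k = "length lam"
  show ?case
  proof (cases "sorted_wrt (\<ge>) w")
    case True
    then show ?thesis
      using word_tabloid_sorted[OF p less.prems] by auto
  next
    case False
    then obtain j where j: "Suc j < length w" "w ! j < w ! Suc j"
      using sorted_wrt_iff_nth_Suc_transp[of "(\<ge>)" w] by (auto simp: transp_def not_le)
    moreover have len: "length w = n"
      using less.prems unfolding is_row_word_def by simp
    ultimately obtain w1 where w1: "(knuth_move n lam)\<^sup>*\<^sup>* (word_tabloid ?k w) (word_tabloid ?k w1)"
      "is_row_word n lam w1" "potential ?k w1 = potential ?k w" "w1 ! (n - 2) < w1 ! (n - 1)"
      using ascent_move_to_end[OF less.prems] by metis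
    have "2 \<le> n"
      using j len by simp
    then obtain u x where ux: "w1 = u @ [x]" "Suc (length u) = n" "is_row_word n lam (x # u)"
      "potential ?k w1 < potential ?k (x # u)"
      using rotate_final_ascent[OF p w1(2) _ w1(4)] by blast
    have "potential ?k (x # u) \<le> int (?k * ?k * n)"
      using potential_le[of ?k "x # u"] ux(2) by simp
    with ux(4) w1(3) have "nat (int (?k * ?k * n) - potential ?k (x # u)) < nat (int (?k * ?k * n) - potential ?k w)"
      by linarith
    then obtain i where "(knuth_move n lam)\<^sup>*\<^sup>* (word_tabloid ?k (x # u)) (rev_row_superstd n lam i)"
      using less.hyps ux(3) by blast
    then show ?thesis
      using w1(1) rev_row_superstd_reachable_snoc[OF ux(2)] ux(1) by (metis rtranclp_trans)
  qed
qed

section \<open>The column superstandard tabloid\<close>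

definition young_cells :: "nat list \<Rightarrow> (nat \<times> nat) set" where
  "young_cells lam = (SIGMA r:{..<length lam}. {..<lam ! r})"

lemma card_young_cells: "card (young_cells lam) = sum_list lam"
  by (simp add: young_cells_def card_SigmaI sum_list_sum_nth atLeast0LessThan)

lemma is_tabloid_cell_filling:
  assumes "sum_list lam = n" and inj: "inj_on f (young_cells lam)" and sub: "f ` young_cells lam \<subseteq> {0..<n}"
  shows "is_tabloid n lam (map (\<lambda>r. (\<lambda>c. f (r, c)) ` {..<lam ! r}) [0..<length lam])"
  unfolding is_tabloid_def
proof (intro conjI allI impI)
  fix r assume "r < length (map (\<lambda>r. (\<lambda>c. f (r, c)) ` {..<lam ! r}) [0..<length lam])"
  then have "inj_on (\<lambda>c. f (r, c)) {..<lam ! r}"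
    using inj unfolding young_cells_def inj_on_def by simp
  then show "card (map (\<lambda>r. (\<lambda>c. f (r, c)) ` {..<lam ! r}) [0..<length lam] ! r) = lam ! r"
    using \<open>r < _\<close> by (simp add: card_image)
next
  fix r s
  assume "r < length (map (\<lambda>r. (\<lambda>c. f (r, c)) ` {..<lam ! r}) [0..<length lam])"
    "s < length (map (\<lambda>r. (\<lambda>c. f (r, c)) ` {..<lam ! r}) [0..<length lam])" "r \<noteq> s"
  then show "map (\<lambda>r. (\<lambda>c. f (r, c)) ` {..<lam ! r}) [0..<length lam] ! r
      \<inter> map (\<lambda>r. (\<lambda>c. f (r, c)) ` {..<lam ! r}) [0..<length lam] ! s = {}"
    using inj unfolding young_cells_def inj_on_def by auto
next
  have "(\<Union>r < length lam. (\<lambda>c. f (r, c)) ` {..<lam ! r}) = f ` young_cells lam"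
    unfolding young_cells_def by auto
  also have "\<dots> = {0..<n}"
    using sub inj assms(1) card_young_cells by (simp add: card_image card_subset_eq)
  finally show "(\<Union>r < length (map (\<lambda>r. (\<lambda>c. f (r, c)) ` {..<lam ! r}) [0..<length lam]).
      map (\<lambda>r. (\<lambda>c. f (r, c)) ` {..<lam ! r}) [0..<length lam] ! r) = {0..<n}"
    by simp
qed simp

definition col_start :: "nat list \<Rightarrow> nat \<Rightarrow> nat" where
  "col_start lam c = (\<Sum>c'<c. col_len lam c')"

lemma col_len_Cons: "col_len (a # lam) c = (if c < a then 1 else 0) + col_len lam c"
  by (simp add: col_len_def)

lemma less_col_len_iff:
  "sorted_wrt (\<ge>) lam \<Longrightarrow> r < col_len lam c \<longleftrightarrow> r < length lam \<and> c < lam ! r"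
proof (induction lam arbitrary: r)
  case (Cons a lam)
  show ?case
  proof (cases "c < a")
    case True
    with Cons show ?thesis
      by (cases r) (simp_all add: col_len_Cons)
  next
    case False
    then have "\<forall>y \<in> set (a # lam). \<not> c < y"
      using Cons.prems by auto
    then show ?thesis
      using nth_mem[of r "a # lam"] by (auto simp: col_len_def filter_empty_conv)
  qed
qed (simp add: col_len_def)

lemma col_start_Suc: "col_start lam (Suc c) = col_start lam c + col_len lam c"
  by (simp add: col_start_def)

lemma col_start_mono: "c \<le> c' \<Longrightarrow> col_start lam c \<le> col_start lam c'"
  unfolding col_start_def by (rule sum_mono2) auto

lemma col_start_inj:
  assumes "r < col_len lam c" "r' < col_len lam c'" "col_start lam c + r = col_start lam c' + r'"
  shows "c = c' \<and> r = r'"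
proof -
  have "\<not> c < c'" if "r < col_len lam c" "col_start lam c + r = col_start lam c' + r'" for c c' r r'
  proof
    assume "c < c'"
    then have "col_start lam (Suc c) \<le> col_start lam c'"
      by (intro col_start_mono) simp
    then show False
      using that col_start_Suc[of lam c] by simp
  qed
  then have "c = c'"
    using assms by (metis linorder_neqE_nat)
  then show ?thesis
    using assms by simp
qed

lemma sum_indicator_less: "(\<Sum>c<N. if c < a then 1 else 0) = min a (N :: nat)"
proof -
  have "{..<N} \<inter> {c. c < a} = {..<min a N}"
    by auto
  then show ?thesis
    by (simp add: sum.If_cases)
qed

lemma col_start_eq_sum_min: "col_start lam N = sum_list (map (min N) lam)"
  unfolding col_start_def
  by (induction lam) (simp add: col_len_def, simp add: col_len_Cons sum.distrib sum_indicator_less min.commute)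

lemma col_start_size:
  assumes "is_partition n lam"
  shows "col_start lam n = n"
proof -
  have "x \<le> n" if "x \<in> set lam" for x
    using assms member_le_sum_list[OF that] unfolding is_partition_def by simp
  then have "map (min n) lam = lam"
    by (simp add: map_idI)
  then show ?thesis
    using assms unfolding is_partition_def col_start_eq_sum_min by simp
qed

lemma col_start_add_less:
  assumes p: "is_partition n lam" and "r < length lam" "c < lam ! r"
  shows "col_start lam c + r < n"
proof -
  have "col_start lam c + r < col_start lam (Suc c)"
    using p assms(2,3) less_col_len_iff col_start_Suc[of lam c] unfolding is_partition_def by simp
  also have "\<dots> \<le> col_start lam n"
    using p assms(2,3) member_le_sum_list[of "lam ! r" lam] unfolding is_partition_def
    by (intro col_start_mono) simp
  finally show ?thesis
    using col_start_size[OF p] by simp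
qed

lemma col_superstd_0:
  assumes p: "is_partition n lam"
  shows "col_superstd n lam 0 = map (\<lambda>r. (\<lambda>c. col_start lam c + r) ` {..<lam ! r}) [0..<length lam]"
  unfolding col_superstd_def col_start_def[symmetric] setcompr_eq_image
  using col_start_add_less[OF p]
  by (intro map_cong refl image_cong) (simp_all add: lessThan_def cls_def flip: of_nat_add of_nat_mod)

lemma is_tabloid_col_superstd:
  assumes p: "is_partition n lam"
  shows "is_tabloid n lam (col_superstd n lam 0)"
proof -
  have s: "sorted_wrt (\<ge>) lam" and sum: "sum_list lam = n"
    using p unfolding is_partition_def by simp_all
  have "inj_on (\<lambda>(r, c). col_start lam c + r) (young_cells lam)"
  proof (rule inj_onI)
    fix a b assume "a \<in> young_cells lam" "b \<in> young_cells lam"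
      and eq: "(\<lambda>(r, c). col_start lam c + r) a = (\<lambda>(r, c). col_start lam c + r) b"
    then obtain r c r' c' where "a = (r, c)" "b = (r', c')" "r < col_len lam c" "r' < col_len lam c'"
      using less_col_len_iff[OF s] unfolding young_cells_def by auto
    then show "a = b"
      using col_start_inj[of r lam c r' c'] eq by simp
  qed
  moreover have "(\<lambda>(r, c). col_start lam c + r) ` young_cells lam \<subseteq> {0..<n}"
    using col_start_add_less[OF p] unfolding young_cells_def by auto
  ultimately have "is_tabloid n lam
      (map (\<lambda>r. (\<lambda>c. (\<lambda>(r, c). col_start lam c + r) (r, c)) ` {..<lam ! r}) [0..<length lam])"
    by (rule is_tabloid_cell_filling[OF sum])
  then show ?thesis
    using col_superstd_0[OF p] by simp
qed

lemma rev_row_superstd_reachable: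
  assumes "is_partition n lam" "is_tabloid n lam T"
  shows "\<exists>i. (knuth_move n lam)\<^sup>*\<^sup>* T (rev_row_superstd n lam i)"
  using ex_row_word[OF assms(2)] row_word_reaches_rev_row_superstd[OF assms(1)] by metis

theorem lemma7p4:
  fixes n :: nat and lam :: "nat list" and T :: "nat set list"
  assumes "1 \<le> n" and "is_partition n lam" and "is_tabloid n lam T"
  shows "(\<exists>i::int. (knuth_move n lam)\<^sup>*\<^sup>* T (rev_row_superstd n lam i))
       \<and> (\<exists>i::int. (knuth_move n lam)\<^sup>*\<^sup>* T (col_superstd n lam i))"
proof -
  have n: "0 < n"
    using assms(1) by simp
  obtain i where i: "(knuth_move n lam)\<^sup>*\<^sup>* T (rev_row_superstd n lam i)"
    using rev_row_superstd_reachable[OF assms(2,3)] by blast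
  obtain j where j: "(knuth_move n lam)\<^sup>*\<^sup>* (col_superstd n lam 0) (rev_row_superstd n lam j)"
    using rev_row_superstd_reachable[OF assms(2) is_tabloid_col_superstd[OF assms(2)]] by blast
  define s where "s = nat ((i - j) mod int n)"
  have "(knuth_move n lam)\<^sup>*\<^sup>* (col_superstd n lam (int s)) (rev_row_superstd n lam (j + int s))"
    using rtranclp_knuth_move_shift_tabloid[OF j n, of s]
    by (simp add: shift_tabloid_col_superstd[OF n] shift_tabloid_rev_row_superstd[OF n])
  moreover have "(j + int s) mod int n = i mod int n"
    using n by (simp add: s_def mod_add_right_eq)
  then have "rev_row_superstd n lam (j + int s) = rev_row_superstd n lam i"
    using rev_row_superstd_mod[of n lam "j + int s"] rev_row_superstd_mod[of n lam i] by simp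
  ultimately have "(knuth_move n lam)\<^sup>*\<^sup>* (rev_row_superstd n lam i) (col_superstd n lam (int s))"
    using rtranclp_knuth_move_sym by simp
  then have "(knuth_move n lam)\<^sup>*\<^sup>* T (col_superstd n lam (int s))"
    using i by (rule rtranclp_trans[rotated])
  with i show ?thesis
    by blast
qed

end
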